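(* Let $\mathbb N$ be a strongly connected symmetric directed graph on $m$ vertices without self-arcs, with arc matrices $C_{ij}$ (each with $n$ columns) having orthonormal rows (so $C_{ij}C_{ij}'=I$), such that $\bar{\mathbb N}$ is well-configured. Let $d_i=|\mathcal N_i|$. For arbitrary $x_i(0)\in\mathbb R^n$, define for each agent $i$ $$x_i(t+1)=x_i(t)-\frac{1}{2(d_i+1)}\sum_{j\in\mathcal N_i}\big(C_{ij}'C_{ij}+C_{ji}'C_{ji}\big)\big(x_i(t)-x_j(t)\big).$$ Then all $x_i(t)$ converge to a common vector $x^*\in\mathbb R^n$ exponentially fast, i.e. there are constants $c>0$, $\rho\in[0,1)$ with $\|x_i(t)-x^*\|\le c\rho^t$ for all $i,t$.
   Context: A directed graph is symmetric if whenever $(i,j)$ is an arc so is $(j,i)$. $\mathcal N_i$ is the set of neighbors of agent $i$. Each arc $(j,i)$ carries a real matrix $C_{ji}$ with $n$ columns; $'$ denotes transpose. $\bar{\mathbb N}$ is well-configured if for all $x_1,\dots,x_m\in\mathbb R^n$, $C_{ji}x_i=C_{ji}x_j$ for every arc $(j,i)$ implies $x_1=\cdots=x_m$. *)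

theory Defs
  imports "Jordan_Normal_Form.Matrix"
begin

text \<open>Agents are the vertices 0..<m; the arc set A is a relation on them.
  An arc (j,i) carries the real matrix C j i. Vectors in R^n are
  elements of carrier_vec n.\<close>

definition neighbors :: "(nat \<times> nat) set \<Rightarrow> nat \<Rightarrow> nat set" where
  "neighbors A i = {j. (j, i) \<in> A}"

definition strongly_connected :: "nat \<Rightarrow> (nat \<times> nat) set \<Rightarrow> bool" where
  "strongly_connected m A \<longleftrightarrow> (\<forall>i<m. \<forall>j<m. (i, j) \<in> A\<^sup>*)"

definition well_configured ::
  "nat \<Rightarrow> nat \<Rightarrow> (nat \<times> nat) set \<Rightarrow> (nat \<Rightarrow> nat \<Rightarrow> real mat) \<Rightarrow> bool" where
  "well_configured m n A C \<longleftrightarrow>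
     (\<forall>x :: nat \<Rightarrow> real vec. (\<forall>i<m. x i \<in> carrier_vec n) \<longrightarrow>
        (\<forall>(j, i) \<in> A. C j i *\<^sub>v x i = C j i *\<^sub>v x j) \<longrightarrow>
        (\<forall>i<m. \<forall>j<m. x i = x j))"

definition vnorm :: "real vec \<Rightarrow> real" where
  "vnorm v = sqrt (\<Sum>k<dim_vec v. (v $ k)\<^sup>2)"

end

theory Submission
  imports Defs "HOL-Analysis.Function_Topology" "HOL-Analysis.Convex"
begin

(* With the weights w_i = d_i + 1 the weighted sum of the states is invariant, since the
   coupling matrices M_ij = C_ij' C_ij + C_ji' C_ji are symmetric in i and j; its normalisation
   is the limit x*. For the deviation e from x*, the Lyapunov function V e = sum_i w_i |e_i|^2
   drops in every step by at least Q e / (2 (m + 1)), where Q e is the sum over all arcs of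
   |C_ij (e_i - e_j)|^2 + |C_ji (e_i - e_j)|^2; the orthonormal rows of the C_ij control the
   quadratic term of the step. Well-configuredness makes Q positive on every nonzero deviation
   with weighted sum 0, so by compactness of the unit sphere Q >= gamma V there, and V contracts
   geometrically. *)

section \<open>Coordinatewise linear algebra\<close>

(* Vectors of R^n are handled as functions nat => real of which only the first n values matter,
   and configurations of the m agents as functions nat => nat => real, so that they carry the
   product topology used in the compactness argument. *)

definition sqnorm :: "nat \<Rightarrow> (nat \<Rightarrow> real) \<Rightarrow> real" where
  "sqnorm n u = (\<Sum>k<n. (u k)\<^sup>2)"

definition mat_app :: "real mat \<Rightarrow> nat \<Rightarrow> (nat \<Rightarrow> real) \<Rightarrow> nat \<Rightarrow> real" where
  "mat_app D n u r = (\<Sum>k<n. D $$ (r, k) * u k)"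

definition mat_tapp :: "real mat \<Rightarrow> (nat \<Rightarrow> real) \<Rightarrow> nat \<Rightarrow> real" where
  "mat_tapp D y k = (\<Sum>r<dim_row D. D $$ (r, k) * y r)"

lemma sqnorm_nonneg: "0 \<le> sqnorm n u"
  by (simp add: sqnorm_def sum_nonneg)

lemma sqnorm_scale: "sqnorm n (\<lambda>k. c * u k) = c\<^sup>2 * sqnorm n u"
  by (simp add: sqnorm_def sum_distrib_left power_mult_distrib)

lemma sqnorm_add_le: "sqnorm n (\<lambda>k. u k + v k) \<le> 2 * sqnorm n u + 2 * sqnorm n v"
proof -
  have "(u k + v k)\<^sup>2 \<le> 2 * (u k)\<^sup>2 + 2 * (v k)\<^sup>2" for k
    using zero_le_power2[of "u k - v k"] by (simp add: power2_eq_square algebra_simps)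
  then show ?thesis
    unfolding sqnorm_def by (simp add: sum_distrib_left sum.distrib[symmetric] sum_mono)
qed

lemma sqnorm_sum_le:
  "sqnorm n (\<lambda>k. \<Sum>j\<in>J. u j k) \<le> real (card J) * (\<Sum>j\<in>J. sqnorm n (u j))"
proof -
  have "sqnorm n (\<lambda>k. \<Sum>j\<in>J. u j k) \<le> (\<Sum>k<n. (\<Sum>j\<in>J. (u j k)\<^sup>2) * card J)"
    unfolding sqnorm_def by (intro sum_mono sum_squared_le_sum_of_squares)
  also have "\<dots> = real (card J) * (\<Sum>j\<in>J. sqnorm n (u j))"
    by (simp add: sqnorm_def sum_distrib_left sum_distrib_right mult_ac sum.swap[of _ J])
  finally show ?thesis .
qed

lemma sqnorm_eq_0D: "sqnorm n u = 0 \<Longrightarrow> k < n \<Longrightarrow> u k = 0"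
  unfolding sqnorm_def by (subst (asm) sum_nonneg_eq_0_iff) auto

lemma mat_app_diff: "mat_app D n (\<lambda>l. u l - v l) r = mat_app D n u r - mat_app D n v r"
  by (simp add: mat_app_def algebra_simps sum_subtractf)

lemma mat_app_scale: "mat_app D n (\<lambda>l. c * u l) = (\<lambda>r. c * mat_app D n u r)"
  by (simp add: fun_eq_iff mat_app_def sum_distrib_left mult_ac)

lemma mat_app_uminus: "mat_app D n (\<lambda>l. - u l) = (\<lambda>r. - mat_app D n u r)"
  by (simp add: fun_eq_iff mat_app_def sum_negf)

lemma mat_tapp_uminus: "mat_tapp D (\<lambda>r. - y r) k = - mat_tapp D y k"
  by (simp add: mat_tapp_def sum_negf)

lemma mat_app_cong: "(\<And>l. l < n \<Longrightarrow> u l = v l) \<Longrightarrow> mat_app D n u = mat_app D n v"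
  by (simp add: fun_eq_iff mat_app_def)

lemma sum_mult_mat_tapp_mat_app:
  "(\<Sum>k<n. u k * mat_tapp D (mat_app D n u) k) = sqnorm (dim_row D) (mat_app D n u)"
proof -
  have "(\<Sum>k<n. u k * mat_tapp D (mat_app D n u) k)
      = (\<Sum>r<dim_row D. \<Sum>k<n. D $$ (r, k) * u k * mat_app D n u r)"
    by (simp add: mat_tapp_def sum_distrib_left mult_ac sum.swap[of _ "{..<n}"])
  also have "\<dots> = (\<Sum>r<dim_row D. (mat_app D n u r)\<^sup>2)"
    by (simp add: mat_app_def sum_distrib_right power2_eq_square)
  finally show ?thesis by (simp add: sqnorm_def)
qed

lemma sqnorm_mat_tapp:
  assumes D: "D \<in> carrier_mat p n" and orth: "D * transpose_mat D = 1\<^sub>m p"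
  shows "sqnorm n (mat_tapp D y) = sqnorm p y"
proof -
  have row_orth: "(\<Sum>k<n. D $$ (r, k) * D $$ (s, k)) = (if r = s then 1 else 0)"
    if "r < p" "s < p" for r s
    using arg_cong[OF orth, of "\<lambda>M. M $$ (r, s)"] D that
    by (simp add: scalar_prod_def atLeast0LessThan)
  have "sqnorm n (mat_tapp D y) = (\<Sum>r<p. \<Sum>s<p. y r * y s * (\<Sum>k<n. D $$ (r, k) * D $$ (s, k)))"
    using D
    by (simp add: sqnorm_def mat_tapp_def power2_eq_square sum_product sum_distrib_left mult_ac
        sum.swap[of _ "{..<n}"])
  also have "\<dots> = (\<Sum>r<p. \<Sum>s<p. if r = s then y r * y s else 0)"
    by (intro sum.cong refl) (simp add: row_orth)
  also have "\<dots> = (\<Sum>r<p. y r * y r)"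
    by (simp add: sum.delta)
  finally show ?thesis by (simp add: sqnorm_def power2_eq_square)
qed

lemma index_mult_mat_vec_mat_app:
  "D \<in> carrier_mat p n \<Longrightarrow> r < p \<Longrightarrow> (D *\<^sub>v vec n u) $ r = mat_app D n u r"
  by (auto simp: mat_app_def scalar_prod_def atLeast0LessThan mult_ac)

lemma gram_carrier_mat: "D \<in> carrier_mat p n \<Longrightarrow> transpose_mat D * D \<in> carrier_mat n n"
  by (rule mult_carrier_mat[OF transpose_carrier_mat[THEN iffD2]])

lemma index_gram_mult_vec:
  assumes D: "D \<in> carrier_mat p n" and k: "k < n"
  shows "((transpose_mat D * D) *\<^sub>v vec n u) $ k = mat_tapp D (mat_app D n u) k"
proof -
  have "(transpose_mat D * D) *\<^sub>v vec n u = transpose_mat D *\<^sub>v (D *\<^sub>v vec n u)"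
    using D by (intro assoc_mult_mat_vec) auto
  then show ?thesis
    using D k by (simp add: mat_tapp_def mat_app_def scalar_prod_def atLeast0LessThan)
qed

section \<open>Coercivity of homogeneous quadratic functionals\<close>

lemma compact_unit_sphere_supported:
  fixes K :: "('a \<Rightarrow> real) set"
  assumes S: "finite S" and K: "closed K" and supp: "\<And>f a. f \<in> K \<Longrightarrow> a \<notin> S \<Longrightarrow> f a = 0"
  shows "compact (K \<inter> {f. (\<Sum>a\<in>S. (f a)\<^sup>2) = 1})"
proof -
  define box where "box = (\<Pi>\<^sub>E a\<in>UNIV. if a \<in> S then {-1..1} else {0::real})"
  have "K \<inter> {f. (\<Sum>a\<in>S. (f a)\<^sup>2) = 1} \<subseteq> box"
  proof
    fix f assume f: "f \<in> K \<inter> {f. (\<Sum>a\<in>S. (f a)\<^sup>2) = 1}"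
    have "(f a)\<^sup>2 \<le> 1" if "a \<in> S" for a
      using f S that member_le_sum[of a S "\<lambda>a. (f a)\<^sup>2"] by simp
    then show "f \<in> box"
      using f supp by (auto simp: box_def abs_square_le_1 abs_le_iff)
  qed
  moreover have "compact box"
    using compactin_PiE[of "\<lambda>_. euclidean" UNIV "\<lambda>a. if a \<in> S then {-1..1} else {0::real}"]
    by (simp add: box_def euclidean_product_topology)
  moreover have "closed (K \<inter> {f. (\<Sum>a\<in>S. (f a)\<^sup>2) = 1})"
    by (intro closed_Int K closed_Collect_eq continuous_intros continuous_on_product_coordinates)
  ultimately show ?thesis
    by (metis compact_Int_closed inf.absorb_iff2)
qed

lemma homogeneous_quadratic_coercive:
  fixes Q :: "('a \<Rightarrow> real) \<Rightarrow> real" and K :: "('a \<Rightarrow> real) set"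
  assumes S: "finite S" and K: "closed K" and Q: "continuous_on UNIV Q"
    and supp: "\<And>f a. f \<in> K \<Longrightarrow> a \<notin> S \<Longrightarrow> f a = 0"
    and cone: "\<And>c f. f \<in> K \<Longrightarrow> (\<lambda>a. c * f a) \<in> K"
    and hom: "\<And>c f. Q (\<lambda>a. c * f a) = c\<^sup>2 * Q f"
    and pos: "\<And>f. f \<in> K \<Longrightarrow> f \<noteq> (\<lambda>_. 0) \<Longrightarrow> Q f > 0"
  shows "\<exists>\<gamma>>0. \<forall>f\<in>K. \<gamma> * (\<Sum>a\<in>S. (f a)\<^sup>2) \<le> Q f"
proof -
  define sphere where "sphere = K \<inter> {f. (\<Sum>a\<in>S. (f a)\<^sup>2) = 1}"
  obtain \<gamma> where \<gamma>: "\<gamma> > 0" and min: "\<And>g. g \<in> sphere \<Longrightarrow> \<gamma> \<le> Q g"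
  proof (cases "sphere = {}")
    case False
    have "compact sphere"
      unfolding sphere_def using S K supp by (rule compact_unit_sphere_supported)
    then obtain g0 where g0: "g0 \<in> sphere" and "\<And>g. g \<in> sphere \<Longrightarrow> Q g0 \<le> Q g"
      using continuous_attains_inf[OF _ False continuous_on_subset[OF Q]] by blast
    moreover have "g0 \<noteq> (\<lambda>_. 0)" using g0 by (auto simp: sphere_def)
    ultimately show thesis using that pos[of g0] by (auto simp: sphere_def)
  qed (use that[of 1] in auto)
  show ?thesis
  proof (intro exI[of _ \<gamma>] conjI ballI \<gamma>)
    fix f assume f: "f \<in> K"
    define s where "s = sqrt (\<Sum>a\<in>S. (f a)\<^sup>2)"
    have s2: "s\<^sup>2 = (\<Sum>a\<in>S. (f a)\<^sup>2)" by (simp add: s_def sum_nonneg)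
    show "\<gamma> * (\<Sum>a\<in>S. (f a)\<^sup>2) \<le> Q f"
    proof (cases "s = 0")
      case True
      then have "f = (\<lambda>a. 0 * f a)"
        using s2 S supp[OF f] by (auto simp: fun_eq_iff sum_nonneg_eq_0_iff)
      then show ?thesis using True s2 hom[of 0 f] by simp
    next
      case False
      define g where "g a = (1 / s) * f a" for a
      have "g \<in> K" using cone[OF f, of "1 / s"] by (simp add: g_def[abs_def])
      moreover have "(\<Sum>a\<in>S. (g a)\<^sup>2) = 1"
        using False by (simp add: g_def power_divide sum_divide_distrib[symmetric] s2[symmetric])
      ultimately have "g \<in> sphere" by (simp add: sphere_def)
      have f_eq: "f = (\<lambda>a. s * g a)" using False by (simp add: g_def)
      have "\<gamma> * (\<Sum>a\<in>S. (f a)\<^sup>2) = s\<^sup>2 * \<gamma>" by (simp add: s2)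
      also have "\<dots> \<le> s\<^sup>2 * Q g" using min[OF \<open>g \<in> sphere\<close>] by (simp add: mult_left_mono)
      also have "\<dots> = Q f" by (simp add: f_eq hom)
      finally show ?thesis .
    qed
  qed
qed

section \<open>The consensus update\<close>

locale consensus_network =
  fixes m n :: nat and A :: "(nat \<times> nat) set" and C :: "nat \<Rightarrow> nat \<Rightarrow> real mat"
  assumes arcs: "A \<subseteq> {0..<m} \<times> {0..<m}" and symm: "sym A"
    and cols: "\<forall>(i, j) \<in> A. C i j \<in> carrier_mat (dim_row (C i j)) n"
    and orth: "\<forall>(i, j) \<in> A. C i j * transpose_mat (C i j) = 1\<^sub>m (dim_row (C i j))"
begin

abbreviation N :: "nat \<Rightarrow> nat set" where
  "N \<equiv> neighbors A"

definition weight :: "nat \<Rightarrow> real" where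
  "weight i = real (card (N i)) + 1"

lemma neighbors_lt: "j \<in> N i \<Longrightarrow> j < m \<and> i < m"
  using arcs by (auto simp: neighbors_def)

lemma neighbors_sym: "j \<in> N i \<longleftrightarrow> i \<in> N j"
  using symm by (auto simp: neighbors_def sym_def)

lemma neighbor_arcs: "j \<in> N i \<Longrightarrow> (j, i) \<in> A \<and> (i, j) \<in> A"
  using symm by (auto simp: neighbors_def sym_def)

lemma finite_neighbors: "finite (N i)"
  by (rule finite_subset[of _ "{..<m}"]) (auto dest: neighbors_lt)

lemma weight_ge_1: "1 \<le> weight i"
  by (simp add: weight_def)

lemma weight_pos: "0 < weight i"
  by (simp add: weight_def add_nonneg_pos)

lemma weight_le: "weight i \<le> real m + 1"
  using card_mono[of "{..<m}" "N i"] by (auto simp: weight_def dest: neighbors_lt)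

lemma arc_carrier: "(i, j) \<in> A \<Longrightarrow> C i j \<in> carrier_mat (dim_row (C i j)) n"
  using cols by auto

lemma arc_orth: "(i, j) \<in> A \<Longrightarrow> C i j * transpose_mat (C i j) = 1\<^sub>m (dim_row (C i j))"
  using orth by auto

lemma sum_neighbors_symmetrize:
  fixes f :: "nat \<Rightarrow> nat \<Rightarrow> real"
  shows "(\<Sum>i<m. \<Sum>j\<in>N i. f i j) = (\<Sum>i<m. \<Sum>j\<in>N i. f i j + f j i) / 2"
proof -
  have "(\<Sum>i<m. \<Sum>j\<in>N i. f j i) = (\<Sum>(i, j)\<in>Sigma {..<m} N. f j i)"
    by (simp add: sum.Sigma finite_neighbors)
  also have "\<dots> = (\<Sum>(i, j)\<in>Sigma {..<m} N. f i j)"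
    by (rule sum.reindex_bij_witness[where i = prod.swap and j = prod.swap])
      (auto simp: neighbors_sym dest: neighbors_lt)
  also have "\<dots> = (\<Sum>i<m. \<Sum>j\<in>N i. f i j)"
    by (simp add: sum.Sigma finite_neighbors)
  finally show ?thesis by (simp add: sum.distrib)
qed

definition coupling :: "(nat \<Rightarrow> nat \<Rightarrow> real) \<Rightarrow> nat \<Rightarrow> nat \<Rightarrow> nat \<Rightarrow> real" where
  "coupling y i j k =
     mat_tapp (C i j) (mat_app (C i j) n (\<lambda>l. y i l - y j l)) k
   + mat_tapp (C j i) (mat_app (C j i) n (\<lambda>l. y i l - y j l)) k"

definition arc_disagreement :: "(nat \<Rightarrow> nat \<Rightarrow> real) \<Rightarrow> nat \<Rightarrow> nat \<Rightarrow> real" where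
  "arc_disagreement y i j =
     sqnorm (dim_row (C i j)) (mat_app (C i j) n (\<lambda>l. y i l - y j l))
   + sqnorm (dim_row (C j i)) (mat_app (C j i) n (\<lambda>l. y i l - y j l))"

definition disagreement :: "(nat \<Rightarrow> nat \<Rightarrow> real) \<Rightarrow> real" where
  "disagreement y = (\<Sum>i<m. \<Sum>j\<in>N i. arc_disagreement y i j)"

definition weighted_sqnorm :: "(nat \<Rightarrow> nat \<Rightarrow> real) \<Rightarrow> real" where
  "weighted_sqnorm y = (\<Sum>i<m. weight i * sqnorm n (y i))"

definition update :: "(nat \<Rightarrow> nat \<Rightarrow> real) \<Rightarrow> nat \<Rightarrow> nat \<Rightarrow> real" where
  "update y i k = y i k - (\<Sum>j\<in>N i. coupling y i j k) / (2 * weight i)"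

definition balanced :: "(nat \<Rightarrow> nat \<Rightarrow> real) \<Rightarrow> bool" where
  "balanced y \<longleftrightarrow> (\<forall>k<n. (\<Sum>i<m. weight i * y i k) = 0)"

definition weighted_mean :: "(nat \<Rightarrow> nat \<Rightarrow> real) \<Rightarrow> nat \<Rightarrow> real" where
  "weighted_mean y k = (\<Sum>i<m. weight i * y i k) / (\<Sum>i<m. weight i)"

lemma coupling_swap: "coupling y j i k = - coupling y i j k"
proof -
  have "(\<lambda>l. y j l - y i l) = (\<lambda>l. - (y i l - y j l))" by simp
  then show ?thesis unfolding coupling_def by (simp only: mat_app_uminus mat_tapp_uminus)
qed

lemma coupling_antisym: "coupling y i j k + coupling y j i k = 0"
  by (simp add: coupling_swap[of y j i])

lemma sum_diff_mult_coupling: "(\<Sum>k<n. (y i k - y j k) * coupling y i j k) = arc_disagreement y i j"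
  by (simp add: coupling_def arc_disagreement_def distrib_left sum.distrib sum_mult_mat_tapp_mat_app)

lemma arc_disagreement_nonneg: "0 \<le> arc_disagreement y i j"
  by (simp add: arc_disagreement_def sqnorm_nonneg)

lemma disagreement_nonneg: "0 \<le> disagreement y"
  by (simp add: disagreement_def arc_disagreement_nonneg sum_nonneg)

lemma weighted_sqnorm_nonneg: "0 \<le> weighted_sqnorm y"
  unfolding weighted_sqnorm_def using weight_pos
  by (intro sum_nonneg mult_nonneg_nonneg) (auto intro: less_imp_le sqnorm_nonneg)

lemma sqnorm_coupling_le: "j \<in> N i \<Longrightarrow> sqnorm n (coupling y i j) \<le> 2 * arc_disagreement y i j"
  using sqnorm_add_le[of n "mat_tapp (C i j) _" "mat_tapp (C j i) _"]
    sqnorm_mat_tapp[OF arc_carrier arc_orth] neighbor_arcs[of j i]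
  by (simp add: coupling_def[abs_def] arc_disagreement_def)

lemma sum_mult_coupling:
  "(\<Sum>i<m. \<Sum>k<n. y i k * (\<Sum>j\<in>N i. coupling y i j k)) = disagreement y / 2"
proof -
  have "(\<Sum>i<m. \<Sum>k<n. y i k * (\<Sum>j\<in>N i. coupling y i j k))
      = (\<Sum>i<m. \<Sum>j\<in>N i. \<Sum>k<n. y i k * coupling y i j k)"
    by (simp add: sum_distrib_left sum.swap[of _ "{..<n}"])
  also have "\<dots> = (\<Sum>i<m. \<Sum>j\<in>N i. arc_disagreement y i j) / 2"
  proof -
    have "(\<Sum>k<n. y i k * coupling y i j k) + (\<Sum>k<n. y j k * coupling y j i k)
        = arc_disagreement y i j" for i j
      by (simp add: coupling_swap[of y j i] sum_diff_mult_coupling[symmetric] left_diff_distrib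
          sum_subtractf sum_negf)
    then show ?thesis by (subst sum_neighbors_symmetrize) simp
  qed
  finally show ?thesis by (simp add: disagreement_def)
qed

lemma sqnorm_sum_coupling_le:
  "sqnorm n (\<lambda>k. \<Sum>j\<in>N i. coupling y i j k)
     \<le> 2 * real (card (N i)) * (\<Sum>j\<in>N i. arc_disagreement y i j)"
proof -
  have "sqnorm n (\<lambda>k. \<Sum>j\<in>N i. coupling y i j k)
      \<le> real (card (N i)) * (\<Sum>j\<in>N i. sqnorm n (coupling y i j))"
    by (rule sqnorm_sum_le)
  also have "\<dots> \<le> real (card (N i)) * (\<Sum>j\<in>N i. 2 * arc_disagreement y i j)"
    by (intro mult_left_mono sum_mono sqnorm_coupling_le) auto
  finally show ?thesis by (simp add: sum_distrib_left mult_ac)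
qed

lemma agent_weighted_sqnorm_update_le:
  fixes y :: "nat \<Rightarrow> nat \<Rightarrow> real" and i :: nat
  defines "g \<equiv> \<lambda>k. \<Sum>j\<in>N i. coupling y i j k"
    and "D \<equiv> \<Sum>j\<in>N i. arc_disagreement y i j"
  shows "weight i * sqnorm n (update y i)
    \<le> weight i * sqnorm n (y i) - (\<Sum>k<n. y i k * g k) + D / 2 - D / (2 * (real m + 1))"
proof -
  have w: "weight i > 0" by (rule weight_pos)
  have D: "0 \<le> D" by (simp add: D_def arc_disagreement_nonneg sum_nonneg)
  have "weight i * sqnorm n (update y i) = (\<Sum>k<n. weight i * (y i k - g k / (2 * weight i))\<^sup>2)"
    by (simp add: sqnorm_def update_def g_def sum_distrib_left)
  also have "\<dots> = (\<Sum>k<n. weight i * (y i k)\<^sup>2 - y i k * g k + (g k)\<^sup>2 / (4 * weight i))"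
    using w by (intro sum.cong refl) (simp add: field_simps power2_eq_square)
  also have "\<dots> = weight i * sqnorm n (y i) - (\<Sum>k<n. y i k * g k) + sqnorm n g / (4 * weight i)"
    by (simp add: sqnorm_def sum.distrib sum_subtractf sum_distrib_left sum_divide_distrib)
  also have "sqnorm n g / (4 * weight i) \<le> 2 * real (card (N i)) * D / (4 * weight i)"
    using w sqnorm_sum_coupling_le[of y i] unfolding g_def D_def by (intro divide_right_mono) auto
  also have "2 * real (card (N i)) * D / (4 * weight i) = D / 2 - D / (2 * weight i)"
    using w by (simp add: weight_def field_simps)
  also have "\<dots> \<le> D / 2 - D / (2 * (real m + 1))"
    using w weight_le[of i] D by (simp add: divide_left_mono)
  finally show ?thesis by simp
qed

lemma weighted_sqnorm_update_le:
  "weighted_sqnorm (update y) \<le> weighted_sqnorm y - disagreement y / (2 * (real m + 1))"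
proof -
  have "weighted_sqnorm (update y) \<le> (\<Sum>i<m. weight i * sqnorm n (y i)
      - (\<Sum>k<n. y i k * (\<Sum>j\<in>N i. coupling y i j k))
      + (\<Sum>j\<in>N i. arc_disagreement y i j) / 2
      - (\<Sum>j\<in>N i. arc_disagreement y i j) / (2 * (real m + 1)))"
    unfolding weighted_sqnorm_def by (intro sum_mono agent_weighted_sqnorm_update_le)
  also have "\<dots> = weighted_sqnorm y - disagreement y / (2 * (real m + 1))"
    by (simp add: weighted_sqnorm_def disagreement_def sum.distrib sum_subtractf
        sum_divide_distrib[symmetric] sum_mult_coupling)
  finally show ?thesis .
qed

lemma sqnorm_le_weighted_sqnorm:
  assumes "i < m"
  shows "sqnorm n (y i) \<le> weighted_sqnorm y"
proof -
  have "sqnorm n (y i) \<le> weight i * sqnorm n (y i)"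
    using weight_ge_1[of i] sqnorm_nonneg[of n "y i"] by (simp add: mult_le_cancel_right1)
  also have "\<dots> \<le> weighted_sqnorm y"
    unfolding weighted_sqnorm_def using assms weight_pos
    by (intro member_le_sum[where f = "\<lambda>i. weight i * sqnorm n (y i)"])
      (auto intro: mult_nonneg_nonneg less_imp_le sqnorm_nonneg)
  finally show ?thesis .
qed

lemma weighted_sum_update: "(\<Sum>i<m. weight i * update y i k) = (\<Sum>i<m. weight i * y i k)"
proof -
  have "(\<Sum>i<m. \<Sum>j\<in>N i. coupling y i j k) = 0"
    by (subst sum_neighbors_symmetrize) (simp add: coupling_antisym)
  moreover have "weight i * update y i k = weight i * y i k - (\<Sum>j\<in>N i. coupling y i j k) / 2" for i
    using weight_ge_1[of i] by (simp add: update_def right_diff_distrib)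
  ultimately show ?thesis by (simp add: sum_subtractf sum_divide_distrib[symmetric])
qed

lemma balanced_funpow_update: "balanced y \<Longrightarrow> balanced ((update ^^ t) y)"
  by (induction t) (simp_all add: balanced_def weighted_sum_update)

lemma update_translate: "update (\<lambda>i k. y i k - c k) = (\<lambda>i k. update y i k - c k)"
  by (simp add: fun_eq_iff update_def coupling_def)

lemma funpow_update_translate:
  "(update ^^ t) (\<lambda>i k. y i k - c k) = (\<lambda>i k. (update ^^ t) y i k - c k)"
  by (induction t) (simp_all add: update_translate)

lemma balanced_minus_weighted_mean: "balanced (\<lambda>i k. y i k - weighted_mean y k)"
proof -
  have "(\<Sum>i<m. weight i * (y i k - weighted_mean y k)) = 0" for k
  proof (cases "m = 0")
    case False
    then have "(\<Sum>i<m. weight i) > 0" using weight_pos by (intro sum_pos) auto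
    then have "(\<Sum>i<m. weight i * weighted_mean y k) = (\<Sum>i<m. weight i * y i k)"
      unfolding sum_distrib_right[symmetric] by (simp add: weighted_mean_def)
    then show ?thesis by (simp add: right_diff_distrib sum_subtractf)
  qed simp
  then show ?thesis by (simp add: balanced_def)
qed

lemma balanced_consensus_eq_0:
  assumes "balanced y" and "\<And>j. j < m \<Longrightarrow> y j k = y i k" and "i < m" "k < n"
  shows "y i k = 0"
proof -
  have "(\<Sum>j<m. weight j) * y i k = (\<Sum>j<m. weight j * y j k)"
    unfolding sum_distrib_right by (intro sum.cong refl) (metis assms(2) lessThan_iff)
  also have "\<dots> = 0"
    using assms(1,4) by (simp add: balanced_def)
  finally have "(\<Sum>j<m. weight j) * y i k = 0" .
  moreover have "(\<Sum>j<m. weight j) > 0"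
    using assms(3) weight_pos by (intro sum_pos) auto
  ultimately show ?thesis by simp
qed

lemma weighted_sqnorm_le:
  "weighted_sqnorm y \<le> (real m + 1) * (\<Sum>(i, k)\<in>{..<m} \<times> {..<n}. (y i k)\<^sup>2)"
proof -
  have "weighted_sqnorm y \<le> (\<Sum>i<m. (real m + 1) * sqnorm n (y i))"
    unfolding weighted_sqnorm_def by (intro sum_mono mult_right_mono weight_le sqnorm_nonneg)
  also have "\<dots> = (real m + 1) * (\<Sum>i<m. \<Sum>k<n. (y i k)\<^sup>2)"
    by (simp add: sqnorm_def sum_distrib_left)
  finally show ?thesis
    by (simp add: sum.cartesian_product)
qed

lemma disagreement_cong:
  assumes "\<And>i k. i < m \<Longrightarrow> k < n \<Longrightarrow> y i k = z i k"
  shows "disagreement y = disagreement z"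
proof -
  have "mat_app D n (\<lambda>l. y i l - y j l) = mat_app D n (\<lambda>l. z i l - z j l)" if "j \<in> N i" for D i j
    using assms neighbors_lt[OF that] by (intro mat_app_cong) auto
  then show ?thesis
    unfolding disagreement_def arc_disagreement_def by (intro sum.cong refl) auto
qed

lemma disagreement_scale: "disagreement (\<lambda>i k. c * y i k) = c\<^sup>2 * disagreement y"
proof -
  have "(\<lambda>l. c * y i l - c * y j l) = (\<lambda>l. c * (y i l - y j l))" for i j
    by (simp add: right_diff_distrib)
  then show ?thesis
    by (simp add: disagreement_def arc_disagreement_def mat_app_scale sqnorm_scale
        sum_distrib_left distrib_left)
qed

lemma continuous_disagreement: "continuous_on UNIV (\<lambda>f. disagreement (curry f))"
  unfolding disagreement_def arc_disagreement_def sqnorm_def mat_app_def curry_def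
  by (intro continuous_intros) simp_all

abbreviation coupling_mat :: "nat \<Rightarrow> nat \<Rightarrow> real mat" where
  "coupling_mat i j \<equiv> transpose_mat (C i j) * C i j + transpose_mat (C j i) * C j i"

lemma coupling_mat_carrier:
  "j \<in> N i \<Longrightarrow> coupling_mat i j \<in> carrier_mat n n"
  using gram_carrier_mat[OF arc_carrier] neighbor_arcs by (intro add_carrier_mat) blast

lemma index_coupling_mult_vec:
  assumes "j \<in> N i" and k: "k < n"
  shows "(coupling_mat i j *\<^sub>v (vec n (y i) - vec n (y j))) $ k = coupling y i j k"
proof -
  have C: "C i j \<in> carrier_mat (dim_row (C i j)) n" "C j i \<in> carrier_mat (dim_row (C j i)) n"
    using arc_carrier neighbor_arcs[OF assms(1)] by auto
  have G: "transpose_mat (C i j) * C i j \<in> carrier_mat n n"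
    "transpose_mat (C j i) * C j i \<in> carrier_mat n n"
    using gram_carrier_mat[OF C(1)] gram_carrier_mat[OF C(2)] .
  have diff: "vec n (y i) - vec n (y j) = vec n (\<lambda>l. y i l - y j l)"
    by (intro eq_vecI) simp_all
  have "coupling_mat i j *\<^sub>v vec n (\<lambda>l. y i l - y j l)
      = (transpose_mat (C i j) * C i j) *\<^sub>v vec n (\<lambda>l. y i l - y j l)
      + (transpose_mat (C j i) * C j i) *\<^sub>v vec n (\<lambda>l. y i l - y j l)"
    by (rule add_mult_distrib_mat_vec[OF G]) simp
  also have "\<dots> $ k = ((transpose_mat (C i j) * C i j) *\<^sub>v vec n (\<lambda>l. y i l - y j l)) $ k
      + ((transpose_mat (C j i) * C j i) *\<^sub>v vec n (\<lambda>l. y i l - y j l)) $ k"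
    using carrier_matD(2)[OF C(2)] k by (intro index_add_vec(1)) simp
  finally show ?thesis
    unfolding diff coupling_def index_gram_mult_vec[OF C(1) k] index_gram_mult_vec[OF C(2) k] .
qed

lemma trajectory_eq_funpow_update:
  fixes x :: "nat \<Rightarrow> nat \<Rightarrow> real vec"
  assumes init: "\<forall>i<m. x 0 i \<in> carrier_vec n"
    and step: "\<forall>t. \<forall>i<m. x (Suc t) i = x t i - (1 / (2 * (real (card (N i)) + 1)))
      \<cdot>\<^sub>v finsum_vec TYPE(real) n (\<lambda>j. coupling_mat i j *\<^sub>v (x t i - x t j)) (N i)"
  shows "i < m \<Longrightarrow> x t i = vec n ((update ^^ t) (\<lambda>i k. x 0 i $ k) i)"
proof (induction t arbitrary: i)
  case 0
  then show ?case using init by (intro eq_vecI) auto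
next
  case (Suc t)
  define y where "y = (update ^^ t) (\<lambda>i k. x 0 i $ k)"
  have x_t: "x t j = vec n (y j)" if "j < m" for j
    using Suc.IH[OF that] by (simp add: y_def)
  define F where "F = finsum_vec TYPE(real) n (\<lambda>j. coupling_mat i j *\<^sub>v (x t i - x t j)) (N i)"
  have summands: "(\<lambda>j. coupling_mat i j *\<^sub>v (x t i - x t j)) \<in> N i \<rightarrow> carrier_vec n"
    using coupling_mat_carrier x_t Suc.prems neighbors_lt by (auto intro!: mult_mat_vec_carrier)
  have F: "F \<in> carrier_vec n"
    unfolding F_def by (rule finsum_vec_closed[OF summands])
  have x_Suc: "x (Suc t) i = x t i - (1 / (2 * weight i)) \<cdot>\<^sub>v F"
    using step Suc.prems by (simp add: F_def weight_def)
  have "x (Suc t) i $ k = update y i k" if k: "k < n" for k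
  proof -
    have "F $ k = (\<Sum>j\<in>N i. coupling y i j k)"
      unfolding F_def index_finsum_vec[OF finite_neighbors k summands]
      using k x_t Suc.prems neighbors_lt by (intro sum.cong) (auto simp: index_coupling_mult_vec)
    then show ?thesis
      using k F x_Suc x_t[OF Suc.prems] by (simp add: update_def)
  qed
  moreover have "dim_vec (x (Suc t) i) = n"
    using F x_Suc by simp
  ultimately show ?case
    by (intro eq_vecI) (simp_all add: y_def)
qed

end

section \<open>Exponential convergence on well-configured networks\<close>

locale well_configured_network = consensus_network +
  assumes wc: "well_configured m n A C"
begin

lemma consensus_if_disagreement_eq_0:
  assumes "disagreement y = 0" and "i < m" "j < m" "k < n"
  shows "y i k = y j k"
proof -
  have arc0: "arc_disagreement y i j = 0" if "j \<in> N i" for i j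
    using assms(1) neighbors_lt[OF that] that unfolding disagreement_def
    by (simp add: sum_nonneg_eq_0_iff arc_disagreement_nonneg sum_nonneg finite_neighbors)
  have "C j i *\<^sub>v vec n (y i) = C j i *\<^sub>v vec n (y j)" if "(j, i) \<in> A" for i j
  proof (rule eq_vecI)
    fix r assume "r < dim_vec (C j i *\<^sub>v vec n (y j))"
    then have r: "r < dim_row (C j i)" by simp
    have "j \<in> N i" using that by (simp add: neighbors_def)
    then have "sqnorm (dim_row (C j i)) (mat_app (C j i) n (\<lambda>l. y i l - y j l)) = 0"
      using arc0 by (simp add: arc_disagreement_def add_nonneg_eq_0_iff sqnorm_nonneg)
    then have "mat_app (C j i) n (\<lambda>l. y i l - y j l) r = 0"
      using r by (rule sqnorm_eq_0D)
    then show "(C j i *\<^sub>v vec n (y i)) $ r = (C j i *\<^sub>v vec n (y j)) $ r"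
      using mat_app_diff[of "C j i" n "y i" "y j" r]
      by (simp add: index_mult_mat_vec_mat_app[OF arc_carrier[OF that] r])
  qed simp
  then have "\<forall>(j, i)\<in>A. C j i *\<^sub>v vec n (y i) = C j i *\<^sub>v vec n (y j)" by blast
  moreover have "(\<forall>i<m. vec n (y i) \<in> carrier_vec n) \<longrightarrow>
      (\<forall>(j, i)\<in>A. C j i *\<^sub>v vec n (y i) = C j i *\<^sub>v vec n (y j)) \<longrightarrow>
      (\<forall>i<m. \<forall>j<m. vec n (y i) = vec n (y j))"
    using wc unfolding well_configured_def by (rule spec)
  ultimately have "vec n (y i) = vec n (y j)"
    using assms(2,3) vec_carrier by blast
  then show ?thesis
    using assms(4) by (metis index_vec)
qed

lemma disagreement_pos:
  assumes "balanced y" and "i < m" "k < n" "y i k \<noteq> 0"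
  shows "disagreement y > 0"
proof (rule ccontr)
  assume "\<not> disagreement y > 0"
  then have "disagreement y = 0" using disagreement_nonneg[of y] by simp
  then have "y j k = y i k" if "j < m" for j
    using that assms(2,3) by (rule consensus_if_disagreement_eq_0)
  then have "y i k = 0" using balanced_consensus_eq_0[OF assms(1)] assms(2,3) by blast
  with assms(4) show False ..
qed

lemma disagreement_coercive_flat:
  "\<exists>\<gamma>>0. \<forall>f. (\<forall>a. a \<notin> {..<m} \<times> {..<n} \<longrightarrow> f a = 0) \<longrightarrow> balanced (curry f) \<longrightarrow>
     \<gamma> * (\<Sum>a\<in>{..<m} \<times> {..<n}. (f a)\<^sup>2) \<le> disagreement (curry f)"
proof -
  define S where "S = {..<m} \<times> {..<n}"
  define K where "K = {f. (\<forall>a. a \<notin> S \<longrightarrow> f a = 0) \<and> balanced (curry f)}"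
  have "\<exists>\<gamma>>0. \<forall>f\<in>K. \<gamma> * (\<Sum>a\<in>S. (f a)\<^sup>2) \<le> disagreement (curry f)"
  proof (rule homogeneous_quadratic_coercive)
    show "finite S" by (simp add: S_def)
    have "K = (\<Inter>a\<in>-S. {f. f a = 0}) \<inter> (\<Inter>k<n. {f. (\<Sum>i<m. weight i * f (i, k)) = 0})"
      by (auto simp: K_def balanced_def)
    then show "closed K"
      by (simp only:) (intro closed_Int closed_INT ballI closed_Collect_eq continuous_intros, simp_all)
    show "continuous_on UNIV (\<lambda>f. disagreement (curry f))"
      by (rule continuous_disagreement)
    show "f a = 0" if "f \<in> K" "a \<notin> S" for f a
      using that unfolding K_def by blast
    show "(\<lambda>a. c * f a) \<in> K" if "f \<in> K" for c f
      using that by (auto simp: K_def balanced_def sum_distrib_left[symmetric] mult.left_commute)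
    show "disagreement (curry (\<lambda>a. c * f a)) = c\<^sup>2 * disagreement (curry f)" for c f
      using disagreement_scale[of c "curry f"] by (simp add: curry_def)
    show "disagreement (curry f) > 0" if f: "f \<in> K" "f \<noteq> (\<lambda>_. 0)" for f
    proof -
      obtain i k where ik: "f (i, k) \<noteq> 0" using f(2) by (auto simp: fun_eq_iff)
      then have "i < m" "k < n" using f(1) by (auto simp: K_def S_def)
      then show ?thesis using f(1) ik by (intro disagreement_pos[of "curry f" i k]) (auto simp: K_def)
    qed
  qed
  then show ?thesis unfolding K_def S_def by auto
qed

lemma disagreement_coercive:
  "\<exists>\<gamma>>0. \<forall>y. balanced y \<longrightarrow> \<gamma> * weighted_sqnorm y \<le> disagreement y"
proof -
  obtain \<gamma> where \<gamma>: "\<gamma> > 0" and bound: "\<And>f. \<forall>a. a \<notin> {..<m} \<times> {..<n} \<longrightarrow> f a = 0 \<Longrightarrow>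
      balanced (curry f) \<Longrightarrow> \<gamma> * (\<Sum>a\<in>{..<m} \<times> {..<n}. (f a)\<^sup>2) \<le> disagreement (curry f)"
    using disagreement_coercive_flat by blast
  show ?thesis
  proof (intro exI[of _ "\<gamma> / (real m + 1)"] conjI allI impI)
    show "\<gamma> / (real m + 1) > 0" using \<gamma> by simp
    fix y assume "balanced y"
    define f where "f = (\<lambda>(i, k). if i < m \<and> k < n then y i k else 0)"
    have "\<gamma> / (real m + 1) * weighted_sqnorm y
        \<le> \<gamma> / (real m + 1) * ((real m + 1) * (\<Sum>(i, k)\<in>{..<m} \<times> {..<n}. (y i k)\<^sup>2))"
      using \<gamma> by (intro mult_left_mono weighted_sqnorm_le) simp
    also have "\<dots> = \<gamma> * (\<Sum>a\<in>{..<m} \<times> {..<n}. (f a)\<^sup>2)"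
      by (auto simp: f_def intro!: sum.cong)
    also have "\<dots> \<le> disagreement (curry f)"
      using \<open>balanced y\<close> by (intro bound) (auto simp: f_def balanced_def)
    also have "\<dots> = disagreement y"
      by (rule disagreement_cong) (simp add: f_def)
    finally show "\<gamma> / (real m + 1) * weighted_sqnorm y \<le> disagreement y" .
  qed
qed

lemma funpow_update_contracts:
  "\<exists>\<rho>. 0 \<le> \<rho> \<and> \<rho> < 1 \<and>
     (\<forall>t y. balanced y \<longrightarrow> weighted_sqnorm ((update ^^ t) y) \<le> \<rho> ^ t * weighted_sqnorm y)"
proof -
  obtain \<gamma> where \<gamma>: "\<gamma> > 0"
    and coercive: "\<And>y. balanced y \<Longrightarrow> \<gamma> * weighted_sqnorm y \<le> disagreement y"
    using disagreement_coercive by blast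
  define \<beta> where "\<beta> = min 1 (\<gamma> / (2 * (real m + 1)))"
  have \<beta>: "0 < \<beta>" "\<beta> \<le> 1" using \<gamma> by (auto simp: \<beta>_def)
  have contraction: "weighted_sqnorm (update y) \<le> (1 - \<beta>) * weighted_sqnorm y" if "balanced y" for y
  proof -
    have "\<beta> * weighted_sqnorm y \<le> \<gamma> / (2 * (real m + 1)) * weighted_sqnorm y"
      by (intro mult_right_mono weighted_sqnorm_nonneg) (simp add: \<beta>_def)
    also have "\<dots> \<le> disagreement y / (2 * (real m + 1))"
      using divide_right_mono[OF coercive[OF that], of "2 * (real m + 1)"] by simp
    finally show ?thesis
      using weighted_sqnorm_update_le[of y] by (simp add: algebra_simps)
  qed
  have "weighted_sqnorm ((update ^^ t) y) \<le> (1 - \<beta>) ^ t * weighted_sqnorm y"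
    if "balanced y" for t y
  proof (induction t)
    case (Suc t)
    have "weighted_sqnorm ((update ^^ Suc t) y) \<le> (1 - \<beta>) * weighted_sqnorm ((update ^^ t) y)"
      using contraction balanced_funpow_update[OF that] by simp
    also have "\<dots> \<le> (1 - \<beta>) * ((1 - \<beta>) ^ t * weighted_sqnorm y)"
      using Suc \<beta> by (intro mult_left_mono) auto
    finally show ?case by (simp add: mult_ac)
  qed simp
  then show ?thesis using \<beta> by (intro exI[of _ "1 - \<beta>"]) auto
qed

lemma funpow_update_converges:
  "\<exists>\<xi>. \<exists>c>0. \<exists>\<rho>. 0 \<le> \<rho> \<and> \<rho> < 1 \<and>
     (\<forall>t. \<forall>i<m. sqrt (sqnorm n (\<lambda>k. (update ^^ t) y i k - \<xi> k)) \<le> c * \<rho> ^ t)"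
proof -
  obtain \<rho> where \<rho>: "0 \<le> \<rho>" "\<rho> < 1" and contraction:
    "\<And>t y. balanced y \<Longrightarrow> weighted_sqnorm ((update ^^ t) y) \<le> \<rho> ^ t * weighted_sqnorm y"
    using funpow_update_contracts by blast
  define e where "e = (\<lambda>i k. y i k - weighted_mean y k)"
  define c where "c = sqrt (weighted_sqnorm e) + 1"
  have "sqrt (sqnorm n (\<lambda>k. (update ^^ t) y i k - weighted_mean y k)) \<le> c * sqrt \<rho> ^ t"
    if "i < m" for t i
  proof -
    have "sqnorm n (\<lambda>k. (update ^^ t) y i k - weighted_mean y k) = sqnorm n ((update ^^ t) e i)"
      by (simp add: e_def funpow_update_translate)
    also have "\<dots> \<le> weighted_sqnorm ((update ^^ t) e)"
      by (rule sqnorm_le_weighted_sqnorm[OF that])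
    also have "\<dots> \<le> \<rho> ^ t * weighted_sqnorm e"
      unfolding e_def by (rule contraction[OF balanced_minus_weighted_mean])
    finally have "sqrt (sqnorm n (\<lambda>k. (update ^^ t) y i k - weighted_mean y k))
        \<le> sqrt (\<rho> ^ t * weighted_sqnorm e)"
      by (rule real_sqrt_le_mono)
    also have "\<dots> = sqrt \<rho> ^ t * sqrt (weighted_sqnorm e)"
      by (simp add: real_sqrt_mult real_sqrt_power)
    also have "\<dots> \<le> c * sqrt \<rho> ^ t"
      unfolding c_def mult.commute[of _ "sqrt \<rho> ^ t"] using \<rho>(1) by (intro mult_left_mono) auto
    finally show ?thesis .
  qed
  moreover have "c > 0"
    by (simp add: c_def add_nonneg_pos weighted_sqnorm_nonneg)
  ultimately show ?thesis
    using \<rho> by (intro exI[of _ "weighted_mean y"] exI[of _ c] exI[of _ "sqrt \<rho>"] conjI allI impI) auto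
qed

end

theorem theorem5:
  fixes m n :: nat
    and A :: "(nat \<times> nat) set"
    and C :: "nat \<Rightarrow> nat \<Rightarrow> real mat"
    and x :: "nat \<Rightarrow> nat \<Rightarrow> real vec"
  assumes arcs: "A \<subseteq> {0..<m} \<times> {0..<m}"
    and symm: "sym A"
    and no_loops: "\<forall>i. (i, i) \<notin> A"
    and sc: "strongly_connected m A"
    and cols: "\<forall>(i, j) \<in> A. C i j \<in> carrier_mat (dim_row (C i j)) n"
    and orth: "\<forall>(i, j) \<in> A. C i j * transpose_mat (C i j) = 1\<^sub>m (dim_row (C i j))"
    and wc: "well_configured m n A C"
    and init: "\<forall>i<m. x 0 i \<in> carrier_vec n"
    and step: "\<forall>t. \<forall>i<m. x (Suc t) i =
       x t i - (1 / (2 * (real (card (neighbors A i)) + 1))) \<cdot>\<^sub>v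
         finsum_vec TYPE(real) n
           (\<lambda>j. (transpose_mat (C i j) * C i j + transpose_mat (C j i) * C j i)
                  *\<^sub>v (x t i - x t j))
           (neighbors A i)"
  shows "\<exists>xstar \<in> carrier_vec n. \<exists>c > 0. \<exists>\<rho>. 0 \<le> \<rho> \<and> \<rho> < 1 \<and>
           (\<forall>t. \<forall>i<m. vnorm (x t i - xstar) \<le> c * \<rho> ^ t)"
proof -
  interpret well_configured_network m n A C
    using arcs symm cols orth wc by unfold_locales
  let ?y = "\<lambda>i k. x 0 i $ k"
  obtain \<xi> c \<rho> where "c > 0" "0 \<le> \<rho>" "\<rho> < 1" and bound:
    "\<And>t i. i < m \<Longrightarrow> sqrt (sqnorm n (\<lambda>k. (update ^^ t) ?y i k - \<xi> k)) \<le> c * \<rho> ^ t"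
    using funpow_update_converges[of ?y] by blast
  have "vnorm (x t i - vec n \<xi>) = sqrt (sqnorm n (\<lambda>k. (update ^^ t) ?y i k - \<xi> k))"
    if "i < m" for t i
    using trajectory_eq_funpow_update[OF init step that] by (simp add: vnorm_def sqnorm_def)
  then show ?thesis
    using \<open>c > 0\<close> \<open>0 \<le> \<rho>\<close> \<open>\<rho> < 1\<close> bound
    by (intro bexI[of _ "vec n \<xi>"] exI[of _ c] exI[of _ \<rho>] conjI allI impI) auto
qed

end
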